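(* Let $n\ge2$, let $\gamma:I\to S^n$ be a spherical unit speed curve and let $P\in S^n$ with $P\neq\pm\mathbf{u}_n(s)$ for all $s\in I$. Then for $s\in I$: $ort_{\gamma,P}'(s)=\mathbf{0}$ if and only if either $ped_{\gamma,P}'(s)=\mathbf{0}$ or $ped_{\gamma,P}(s)$ is a singular point of $\Phi_P$.
   Context: $I\subset\mathbb{R}$ is an open interval and $S^n$ the unit sphere in $\mathbb{R}^{n+1}$; the dot denotes the Euclidean inner product. A regular curve $\gamma:I\to S^n$ is a spherical unit speed curve if, setting $\mathbf{u}_{-1}\equiv\mathbf{0}$, $\mathbf{u}_0=\gamma$, $\|\mathbf{u}_0'\|\equiv 1$, $\kappa_0\equiv 0$, the maps $\mathbf{u}_i(s)=\dfrac{\mathbf{u}_{i-1}'(s)+\kappa_{i-1}(s)\mathbf{u}_{i-2}(s)}{\|\mathbf{u}_{i-1}'(s)+\kappa_{i-1}(s)\mathbf{u}_{i-2}(s)\|}$ with $\kappa_i(s)=\|\mathbf{u}_{i-1}'(s)+\kappa_{i-1}(s)\mathbf{u}_{i-2}(s)\|>0$ are well-defined for $1\le i\le n-1$ and all $s\in I$. Then $\mathbf{u}_0(s),\dots,\mathbf{u}_{n-1}(s)$ are orthonormal, and the spherical dual curve $\mathbf{u}_n:I\to S^n$ is defined by requiring $\mathbf{u}_0(s),\dots,\mathbf{u}_n(s)$ orthonormal with $\det(\mathbf{u}_0(s),\dots,\mathbf{u}_n(s))=1$. For $P\in S^n$ with $P\cdot\mathbf{u}_n(s)\neq\pm1$,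 the spherical pedal curve is $ped_{\gamma,P}(s)=\dfrac{P-(P\cdot\mathbf{u}_n(s))\mathbf{u}_n(s)}{\sqrt{1-(P\cdot\mathbf{u}_n(s))^2}}$. For any $P\in S^n$ the spherical orthotomic curve is $ort_{\gamma,P}(s)=\sum_{i=0}^{n-1}(P\cdot\mathbf{u}_i(s))\mathbf{u}_i(s)-(P\cdot\mathbf{u}_n(s))\mathbf{u}_n(s)=P-2(P\cdot\mathbf{u}_n(s))\mathbf{u}_n(s)$. For $P\in S^n$, $\Phi_P:\mathbb{R}^{n+1}\to\mathbb{R}^{n+1}$ is $\Phi_P(\mathbf{x})=2(P\cdot\mathbf{x})\mathbf{x}-P$; a singular point of $\Phi_P$ is a point where its differential is not of full rank. *)

theory Defs
  imports "HOL-Analysis.Analysis"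
begin

text \<open>Vectors of R^(n+1) are modelled as real^'m with card (UNIV :: 'm set) = n+1; the index type
  carries an enumeration fixing the order of the coordinates (used for the determinant).\<close>

definition vderiv :: "(real \<Rightarrow> 'a::real_normed_vector) \<Rightarrow> real \<Rightarrow> 'a" where
  "vderiv f = (\<lambda>s. vector_derivative f (at s))"

definition smooth_curve_on :: "real set \<Rightarrow> (real \<Rightarrow> 'a::real_normed_vector) \<Rightarrow> bool" where
  "smooth_curve_on I f \<longleftrightarrow> (\<forall>k. \<forall>s\<in>I. ((vderiv ^^ k) f) differentiable (at s))"

text \<open>frm g i = (u_(i-1), u_i, kappa_i), with u_(-1) = 0, u_0 = g, kappa_0 = 0.\<close>
fun frm :: "(real \<Rightarrow> 'a::real_normed_vector) \<Rightarrow> nat \<Rightarrow> (real \<Rightarrow> 'a) \<times> (real \<Rightarrow> 'a) \<times> (real \<Rightarrow> real)" where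
  "frm g 0 = ((\<lambda>s. 0), g, (\<lambda>s. 0))"
| "frm g (Suc i) = (case frm g i of (up, u, k) \<Rightarrow>
      (let w = (\<lambda>s. vderiv u s + k s *\<^sub>R up s)
       in (u, (\<lambda>s. inverse (norm (w s)) *\<^sub>R w s), (\<lambda>s. norm (w s)))))"

definition sframe :: "(real \<Rightarrow> 'a::real_normed_vector) \<Rightarrow> nat \<Rightarrow> real \<Rightarrow> 'a" where
  "sframe g i = fst (snd (frm g i))"

definition scurv :: "(real \<Rightarrow> 'a::real_normed_vector) \<Rightarrow> nat \<Rightarrow> real \<Rightarrow> real" where
  "scurv g i = snd (snd (frm g i))"

definition sph_unit_speed_curve :: "real set \<Rightarrow> (real \<Rightarrow> real^'m::enum) \<Rightarrow> bool" where
  "sph_unit_speed_curve I g \<longleftrightarrow>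
     smooth_curve_on I g \<and>
     (\<forall>s\<in>I. norm (g s) = 1 \<and> norm (vderiv g s) = 1) \<and>
     (\<forall>i. 1 \<le> i \<and> i \<le> card (UNIV :: 'm set) - 2 \<longrightarrow> (\<forall>s\<in>I. scurv g i s > 0))"

definition idx_pos :: "'m::enum \<Rightarrow> nat" where
  "idx_pos j = (LEAST k. (Enum.enum :: 'm::enum list) ! k = j)"

definition frame_det :: "(nat \<Rightarrow> real^'m::enum) \<Rightarrow> real" where
  "frame_det v = det (\<chi> i j. v (idx_pos i) $ j :: real^'m::enum^'m::enum)"

text \<open>Spherical dual curve u_n (here n = card (UNIV :: 'm set) - 1).\<close>
definition sph_dual :: "(real \<Rightarrow> real^'m::enum) \<Rightarrow> real \<Rightarrow> real^'m::enum" where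
  "sph_dual g s = (THE v. (\<forall>i<card (UNIV :: 'm set) - 1. sframe g i s \<bullet> v = 0) \<and> norm v = 1 \<and>
       frame_det (\<lambda>i. if i = card (UNIV :: 'm set) - 1 then v else sframe g i s) = 1)"

definition sph_pedal :: "(real \<Rightarrow> real^'m::enum) \<Rightarrow> real^'m::enum \<Rightarrow> real \<Rightarrow> real^'m::enum" where
  "sph_pedal g P s = inverse (sqrt (1 - (P \<bullet> sph_dual g s)^2)) *\<^sub>R
       (P - (P \<bullet> sph_dual g s) *\<^sub>R sph_dual g s)"

definition sph_orthotomic :: "(real \<Rightarrow> real^'m::enum) \<Rightarrow> real^'m::enum \<Rightarrow> real \<Rightarrow> real^'m::enum" where
  "sph_orthotomic g P s = P - (2 * (P \<bullet> sph_dual g s)) *\<^sub>R sph_dual g s"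

definition PhiP :: "'a::real_inner \<Rightarrow> 'a \<Rightarrow> 'a" where
  "PhiP P x = (2 * (P \<bullet> x)) *\<^sub>R x - P"

definition singular_point :: "('a::euclidean_space \<Rightarrow> 'a) \<Rightarrow> 'a \<Rightarrow> bool" where
  "singular_point f x \<longleftrightarrow> dim (range (frechet_derivative f (at x))) < DIM('a)"

end

theory Submission
  imports Defs
begin

text \<open>On \<open>I\<close> the vectors \<open>u\<^sub>0, \<dots>, u\<^sub>n\<^sub>-\<^sub>1\<close> are orthonormal (the Frenet equations
  \<open>u\<^sub>i' = \<kappa>\<^sub>i\<^sub>+\<^sub>1 u\<^sub>i\<^sub>+\<^sub>1 - \<kappa>\<^sub>i u\<^sub>i\<^sub>-\<^sub>1\<close> propagate orthonormality), so the determinant condition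
  singles out a unique unit vector \<open>u\<^sub>n\<close>, and \<open>P \<noteq> \<plusminus>u\<^sub>n\<close> gives \<open>\<bar>P \<bullet> u\<^sub>n\<bar> < 1\<close>.
  The pedal point \<open>x = ped(s)\<close> then satisfies \<open>P \<bullet> x = sqrt (1 - (P \<bullet> u\<^sub>n)\<^sup>2) > 0\<close> and
  \<open>ort = \<Phi>\<^sub>P \<circ> ped\<close>. The differential \<open>v \<mapsto> 2 (P \<bullet> v) x + 2 (P \<bullet> x) v\<close> of \<open>\<Phi>\<^sub>P\<close> at \<open>x\<close> is
  injective as soon as \<open>P \<bullet> x \<noteq> 0\<close>, so \<open>ped(s)\<close> is never a singular point of \<open>\<Phi>\<^sub>P\<close> and
  \<open>ort'(s) = 0\<close> iff \<open>ped'(s) = 0\<close>. If \<open>ped\<close> is not differentiable at \<open>s\<close>, neither is \<open>ort\<close>,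
  because \<open>ped = \<Psi>\<^sub>P \<circ> ort\<close> with \<open>\<Psi>\<^sub>P\<close> differentiable near \<open>ort(s)\<close>; both derivatives are then
  the same junk value.\<close>

section \<open>Iterated differentiability on an open set\<close>

fun differentiable_upto :: "nat \<Rightarrow> real set \<Rightarrow> (real \<Rightarrow> 'a::real_normed_vector) \<Rightarrow> bool" where
  "differentiable_upto 0 I f \<longleftrightarrow> True"
| "differentiable_upto (Suc k) I f \<longleftrightarrow>
     (\<exists>f'. (\<forall>s\<in>I. (f has_vector_derivative f' s) (at s)) \<and> differentiable_upto k I f')"

lemma differentiable_upto_SucI:
  "(\<And>s. s \<in> I \<Longrightarrow> (f has_vector_derivative f' s) (at s)) \<Longrightarrow> differentiable_upto k I f' \<Longrightarrow>
     differentiable_upto (Suc k) I f"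
  by auto

lemma differentiable_upto_SucD: "differentiable_upto (Suc k) I f \<Longrightarrow> differentiable_upto k I f"
  by (induction k arbitrary: f) auto

lemma differentiable_upto_cong:
  assumes "open I" "differentiable_upto k I f" "\<And>s. s \<in> I \<Longrightarrow> f s = h s"
  shows "differentiable_upto k I h"
  using assms(2,3)
proof (induction k arbitrary: f h)
  case (Suc k)
  then obtain f' where "\<forall>s\<in>I. (f has_vector_derivative f' s) (at s)" "differentiable_upto k I f'"
    by auto
  with Suc.prems(2) show ?case
    by (intro differentiable_upto_SucI[of I h f'])
      (auto intro: has_vector_derivative_transform_within_open[OF _ assms(1)])
qed simp

lemma differentiable_upto_const: "differentiable_upto k I (\<lambda>s. c)"
  by (induction k arbitrary: c) (auto intro!: exI[of _ "\<lambda>s. 0"])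

lemma differentiable_upto_add:
  "differentiable_upto k I f \<Longrightarrow> differentiable_upto k I h \<Longrightarrow>
     differentiable_upto k I (\<lambda>s. f s + h s)"
proof (induction k arbitrary: f h)
  case (Suc k)
  then obtain f' h' where
    "\<forall>s\<in>I. (f has_vector_derivative f' s) (at s)" "differentiable_upto k I f'"
    "\<forall>s\<in>I. (h has_vector_derivative h' s) (at s)" "differentiable_upto k I h'"
    by auto
  with Suc.IH show ?case
    by (auto intro!: exI[of _ "\<lambda>s. f' s + h' s"] has_vector_derivative_add)
qed simp

lemma differentiable_upto_bilinear:
  assumes "bounded_bilinear mult_op"
  shows "differentiable_upto k I f \<Longrightarrow> differentiable_upto k I h \<Longrightarrow>
     differentiable_upto k I (\<lambda>s. mult_op (f s) (h s))"
proof (induction k arbitrary: f h)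
  case (Suc k)
  then obtain f' h' where f': "\<forall>s\<in>I. (f has_vector_derivative f' s) (at s)" "differentiable_upto k I f'"
    and h': "\<forall>s\<in>I. (h has_vector_derivative h' s) (at s)" "differentiable_upto k I h'"
    by auto
  have "differentiable_upto k I f" "differentiable_upto k I h"
    using Suc.prems differentiable_upto_SucD by blast+
  then have "differentiable_upto k I (\<lambda>s. mult_op (f s) (h' s) + mult_op (f' s) (h s))"
    using Suc.IH f'(2) h'(2) differentiable_upto_add by blast
  moreover have "((\<lambda>s. mult_op (f s) (h s)) has_vector_derivative mult_op (f s) (h' s) + mult_op (f' s) (h s)) (at s)"
    if "s \<in> I" for s
    using bounded_bilinear.has_vector_derivative[OF assms] f'(1) h'(1) that by blast
  ultimately show ?case by (rule differentiable_upto_SucI[rotated])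
qed simp

lemmas differentiable_upto_scaleR = differentiable_upto_bilinear[OF bounded_bilinear_scaleR]
lemmas differentiable_upto_inner = differentiable_upto_bilinear[OF bounded_bilinear_inner]
lemmas differentiable_upto_mult = differentiable_upto_bilinear[OF bounded_bilinear_mult]

lemma differentiable_upto_inverse:
  fixes a :: "real \<Rightarrow> real"
  shows "differentiable_upto k I a \<Longrightarrow> (\<And>s. s \<in> I \<Longrightarrow> a s \<noteq> 0) \<Longrightarrow>
     differentiable_upto k I (\<lambda>s. inverse (a s))"
proof (induction k arbitrary: a)
  case (Suc k)
  then obtain a' where a': "\<forall>s\<in>I. (a has_real_derivative a' s) (at s)" "differentiable_upto k I a'"
    by (auto simp: has_real_derivative_iff_has_vector_derivative)
  have inv: "differentiable_upto k I (\<lambda>s. inverse (a s))"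
    using Suc differentiable_upto_SucD by blast
  have "differentiable_upto k I (\<lambda>s. - (inverse (a s) * inverse (a s)) * a' s)"
    using differentiable_upto_mult[OF differentiable_upto_mult[OF differentiable_upto_const
          differentiable_upto_mult[OF inv inv]] a'(2), of "-1"] by simp
  moreover have "((\<lambda>s. inverse (a s)) has_real_derivative - (inverse (a s) * inverse (a s)) * a' s) (at s)"
    if "s \<in> I" for s
    using DERIV_inverse_fun[OF a'(1)[rule_format, OF that] Suc.prems(2)[OF that]]
    by (simp add: power2_eq_square algebra_simps)
  ultimately show ?case
    by (intro differentiable_upto_SucI[rotated]) (auto simp: has_real_derivative_iff_has_vector_derivative)
qed simp

lemma differentiable_upto_sqrt:
  fixes a :: "real \<Rightarrow> real"
  shows "differentiable_upto k I a \<Longrightarrow> (\<And>s. s \<in> I \<Longrightarrow> a s > 0) \<Longrightarrow>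
     differentiable_upto k I (\<lambda>s. sqrt (a s))"
proof (induction k arbitrary: a)
  case (Suc k)
  then obtain a' where a': "\<forall>s\<in>I. (a has_real_derivative a' s) (at s)" "differentiable_upto k I a'"
    by (auto simp: has_real_derivative_iff_has_vector_derivative)
  have "differentiable_upto k I (\<lambda>s. sqrt (a s))"
    using Suc differentiable_upto_SucD by blast
  then have "differentiable_upto k I (\<lambda>s. 2 * sqrt (a s))"
    by (rule differentiable_upto_mult[OF differentiable_upto_const])
  then have "differentiable_upto k I (\<lambda>s. inverse (2 * sqrt (a s)))"
    by (rule differentiable_upto_inverse) (use Suc.prems(2) in force)
  then have "differentiable_upto k I (\<lambda>s. inverse (2 * sqrt (a s)) * a' s)"
    using differentiable_upto_mult a'(2) by blast
  moreover have "((\<lambda>s. sqrt (a s)) has_real_derivative inverse (2 * sqrt (a s)) * a' s) (at s)"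
    if "s \<in> I" for s
    using DERIV_chain2[OF DERIV_real_sqrt a'(1)[rule_format, OF that]] Suc.prems(2)[OF that]
    by (simp add: field_simps)
  ultimately show ?case
    by (intro differentiable_upto_SucI[rotated]) (auto simp: has_real_derivative_iff_has_vector_derivative)
qed simp

lemma smooth_curve_on_imp_differentiable_upto:
  "smooth_curve_on I f \<Longrightarrow> differentiable_upto k I f"
proof (induction k arbitrary: f)
  case (Suc k)
  have "smooth_curve_on I (vderiv f)"
    using Suc.prems unfolding smooth_curve_on_def by (metis comp_apply funpow_Suc_right)
  moreover have "(f has_vector_derivative vderiv f s) (at s)" if "s \<in> I" for s
    using Suc.prems that unfolding smooth_curve_on_def vderiv_def
    by (metis funpow_0 vector_derivative_works)
  ultimately show ?case using Suc.IH by (blast intro: differentiable_upto_SucI)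
qed simp

lemma differentiable_upto_vderiv:
  assumes "open I" "differentiable_upto (Suc k) I f"
  shows "differentiable_upto k I (vderiv f)"
    and "\<And>s. s \<in> I \<Longrightarrow> (f has_vector_derivative vderiv f s) (at s)"
proof -
  obtain f' where f': "\<forall>s\<in>I. (f has_vector_derivative f' s) (at s)" "differentiable_upto k I f'"
    using assms(2) by auto
  have eq: "vderiv f s = f' s" if "s \<in> I" for s
    using f'(1) that unfolding vderiv_def by (blast intro: vector_derivative_at)
  show "differentiable_upto k I (vderiv f)"
    using differentiable_upto_cong[OF assms(1) f'(2), of "vderiv f"] eq by metis
  show "(f has_vector_derivative vderiv f s) (at s)" if "s \<in> I" for s
    using f'(1) eq that by metis
qed

lemma const_inner_derivative_eq_0:
  fixes f h :: "real \<Rightarrow> 'a::real_inner"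
  assumes "open I" "s \<in> I" "\<And>t. t \<in> I \<Longrightarrow> f t \<bullet> h t = c"
    and "(f has_vector_derivative f') (at s)" "(h has_vector_derivative h') (at s)"
  shows "f s \<bullet> h' + f' \<bullet> h s = 0"
proof -
  have "((\<lambda>t. f t \<bullet> h t) has_vector_derivative f s \<bullet> h' + f' \<bullet> h s) (at s)"
    using bounded_bilinear.has_vector_derivative[OF bounded_bilinear_inner assms(4,5)] by simp
  moreover have "((\<lambda>t. f t \<bullet> h t) has_vector_derivative 0) (at s)"
    by (rule has_vector_derivative_transform_within_open[OF has_vector_derivative_const assms(1,2)])
      (simp add: assms(3))
  ultimately show ?thesis using vector_derivative_unique_at by blast
qed

section \<open>Completing an orthonormal family to a positive frame\<close>

lemma idx_pos_less: "idx_pos (j::'m::enum) < CARD('m)"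
  and enum_nth_idx_pos: "(Enum.enum :: 'm list) ! idx_pos j = j"
proof -
  obtain k where k: "k < length (Enum.enum :: 'm list)" "(Enum.enum :: 'm list) ! k = j"
    using UNIV_enum in_set_conv_nth[of j "Enum.enum :: 'm list"] by auto
  show "(Enum.enum :: 'm list) ! idx_pos j = j"
    unfolding idx_pos_def by (rule LeastI[of _ k]) (rule k(2))
  have "idx_pos j \<le> k"
    unfolding idx_pos_def by (rule Least_le) (rule k(2))
  then show "idx_pos j < CARD('m)"
    using k(1) by (simp add: card_UNIV_length_enum)
qed

lemma idx_pos_eq_iff: "idx_pos (i::'m::enum) = idx_pos j \<longleftrightarrow> i = j"
  by (metis enum_nth_idx_pos)

lemma idx_pos_surj: "k < CARD('m::enum) \<Longrightarrow> \<exists>j::'m. idx_pos j = k"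
proof
  assume k: "k < CARD('m)"
  let ?j = "(Enum.enum :: 'm list) ! k"
  show "idx_pos ?j = k"
    using enum_nth_idx_pos[of ?j] idx_pos_less[of ?j] k
    by (metis card_UNIV_length_enum enum_distinct nth_eq_iff_index_eq)
qed

definition frame_matrix :: "(nat \<Rightarrow> real^'m::enum) \<Rightarrow> real^'m::enum^'m::enum" where
  "frame_matrix v = (\<chi> i. v (idx_pos i))"

lemma frame_det_eq_det_frame_matrix: "frame_det v = det (frame_matrix v)"
  by (simp add: frame_det_def frame_matrix_def vec_lambda_eta)

definition orthonormal_upto :: "nat \<Rightarrow> (nat \<Rightarrow> 'a::real_inner) \<Rightarrow> bool" where
  "orthonormal_upto n v \<longleftrightarrow> (\<forall>i<n. \<forall>j<n. v i \<bullet> v j = (if i = j then 1 else 0))"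

lemma orthonormal_upto_fun_upd:
  assumes "orthonormal_upto n v" "norm x = 1" "\<forall>i<n. v i \<bullet> x = 0"
  shows "orthonormal_upto (Suc n) (v(n := x))"
  using assms unfolding orthonormal_upto_def
  by (auto simp: less_Suc_eq inner_commute dot_square_norm)

lemma orthogonal_matrix_frame_matrix:
  assumes "orthonormal_upto CARD('m) (v :: nat \<Rightarrow> real^'m::enum)"
  shows "orthogonal_matrix (frame_matrix v)"
  unfolding orthogonal_matrix_orthonormal_rows
proof safe
  have row: "row i (frame_matrix v) = v (idx_pos i)" for i
    by (simp add: row_def frame_matrix_def vec_lambda_eta)
  show "norm (row i (frame_matrix v)) = 1" for i
    using assms idx_pos_less[of i] unfolding orthonormal_upto_def row
    by (simp add: norm_eq_sqrt_inner)
  show "orthogonal (row i (frame_matrix v)) (row j (frame_matrix v))" if "i \<noteq> j" for i j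
    using assms idx_pos_less[of i] idx_pos_less[of j] that idx_pos_eq_iff[of i j]
    unfolding orthonormal_upto_def row orthogonal_def by simp
qed

lemma frame_det_fun_upd_uminus:
  fixes v :: "nat \<Rightarrow> real^'m::enum"
  assumes "n < CARD('m)"
  shows "frame_det (v(n := - x)) = - frame_det (v(n := x))"
proof -
  obtain k :: 'm where k: "idx_pos k = n" using idx_pos_surj assms by blast
  let ?a = "\<lambda>i. (v(n := x)) (idx_pos i)"
  have "frame_matrix (v(n := - x)) = (\<chi> i. if i = k then (-1) *s ?a i else ?a i)"
    and "frame_matrix (v(n := x)) = (\<chi> i. if i = k then ?a i else ?a i)"
    using k idx_pos_eq_iff[of _ k] by (auto simp: frame_matrix_def vec_eq_iff)
  then show ?thesis
    unfolding frame_det_eq_det_frame_matrix using det_row_mul[of k "-1::real" ?a ?a] by simp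
qed

lemma orthonormal_completion_exists:
  fixes v :: "nat \<Rightarrow> real^'m::enum"
  defines "n \<equiv> CARD('m) - 1"
  assumes "orthonormal_upto n v"
  shows "\<exists>x. (\<forall>i<n. v i \<bullet> x = 0) \<and> norm x = 1 \<and> frame_det (v(n := x)) = 1"
proof -
  have "dim (v ` {..<n}) \<le> card (v ` {..<n})"
    by (rule dim_le_card) (auto intro: span_base)
  also have "\<dots> < DIM(real^'m::enum)"
    using card_image_le[of "{..<n}" v] unfolding n_def
    by simp (use finite_UNIV_card_ge_0[where 'a='m, OF finite] in linarith)
  finally obtain w where w: "w \<noteq> 0" "\<And>y. y \<in> span (v ` {..<n}) \<Longrightarrow> orthogonal w y"
    using orthogonal_to_subspace_exists by blast
  define x where "x = inverse (norm w) *\<^sub>R w"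
  have "v i \<bullet> w = 0" if "i < n" for i
    using w(2)[of "v i"] that by (auto simp: orthogonal_def inner_commute intro: span_base)
  then have x: "\<forall>i<n. v i \<bullet> x = 0" "norm x = 1"
    using w(1) by (auto simp: x_def)
  then have "orthonormal_upto CARD('m) (v(n := x))"
    using orthonormal_upto_fun_upd[OF assms(2)] unfolding n_def by simp
  then have "frame_det (v(n := x)) = 1 \<or> frame_det (v(n := x)) = -1"
    unfolding frame_det_eq_det_frame_matrix
    by (intro det_orthogonal_matrix orthogonal_matrix_frame_matrix)
  then show ?thesis
  proof
    assume "frame_det (v(n := x)) = 1"
    with x show ?thesis by blast
  next
    assume "frame_det (v(n := x)) = -1"
    then have "frame_det (v(n := - x)) = 1"
      using frame_det_fun_upd_uminus[of n v x] by (simp add: n_def)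
    with x show ?thesis
      by (intro exI[of _ "- x"]) simp
  qed
qed

lemma orthonormal_completion_unique:
  fixes v :: "nat \<Rightarrow> real^'m::enum"
  defines "n \<equiv> CARD('m) - 1"
  assumes "orthonormal_upto n v"
    and x: "\<forall>i<n. v i \<bullet> x = 0" "norm x = 1" "frame_det (v(n := x)) = 1"
    and y: "\<forall>i<n. v i \<bullet> y = 0" "norm y = 1" "frame_det (v(n := y)) = 1"
  shows "y = x"
proof -
  define M where "M = frame_matrix (v(n := x))"
  have "orthonormal_upto CARD('m) (v(n := x))"
    using orthonormal_upto_fun_upd[OF assms(2) x(2,1)] unfolding n_def by simp
  then have M: "orthogonal_matrix M"
    unfolding M_def by (rule orthogonal_matrix_frame_matrix)
  \<comment> \<open>the component of \<open>y\<close> orthogonal to \<open>x\<close> is orthogonal to every row of \<open>M\<close>\<close>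
  define z where "z = y - (y \<bullet> x) *\<^sub>R x"
  have "(M *v z) $ i = 0" for i
  proof -
    have "idx_pos i < n \<or> idx_pos i = n"
      using idx_pos_less[of i] unfolding n_def by linarith
    then show ?thesis
      using x y unfolding M_def frame_matrix_def matrix_vector_mul_component z_def
      by (auto simp: inner_diff_right dot_square_norm inner_commute)
  qed
  then have "M *v z = 0"
    by (simp add: vec_eq_iff)
  moreover have "transpose M *v (M *v z) = z"
    using M by (simp add: orthogonal_matrix_def matrix_vector_mul_assoc)
  ultimately have "y = (y \<bullet> x) *\<^sub>R x"
    by (simp add: z_def)
  moreover from this have "\<bar>y \<bullet> x\<bar> = 1"
    using x(2) y(2) by (metis mult.right_neutral norm_scaleR real_norm_def)
  moreover have "frame_det (v(n := - x)) = -1"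
    using frame_det_fun_upd_uminus[of n v x] x(3) unfolding n_def by simp
  ultimately show ?thesis
    using y(3) by (cases "y \<bullet> x \<ge> 0") auto
qed

section \<open>The Frenet frame of a spherical curve\<close>

lemma sframe_0 [simp]: "sframe g 0 = g"
  and scurv_0 [simp]: "scurv g 0 s = 0"
  by (simp_all add: sframe_def scurv_def)

text \<open>Since \<open>\<kappa>\<^sub>0 = 0\<close>, the term \<open>\<kappa>\<^sub>i u\<^sub>i\<^sub>-\<^sub>1\<close> can use the truncated index \<open>i - 1\<close> in place
  of \<open>u\<^sub>-\<^sub>1 = 0\<close>.\<close>

lemma scurv_scaleR_prev:
  "scurv g i s *\<^sub>R fst (frm g i) s = scurv g i s *\<^sub>R sframe g (i - 1) s"
  by (cases i) (simp_all add: sframe_def scurv_def split: prod.split)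

lemma frm_Suc:
  "frm g (Suc i) = (let w = (\<lambda>s. vderiv (sframe g i) s + scurv g i s *\<^sub>R sframe g (i - 1) s)
     in (sframe g i, (\<lambda>s. inverse (norm (w s)) *\<^sub>R w s), (\<lambda>s. norm (w s))))"
proof -
  obtain up u k where frm: "frm g i = (up, u, k)" by (cases "frm g i")
  have "k s *\<^sub>R up s = k s *\<^sub>R sframe g (i - 1) s" for s
    using scurv_scaleR_prev[of g i s] frm by (simp add: scurv_def)
  moreover have "sframe g i = u" "scurv g i = k"
    using frm by (simp_all add: sframe_def scurv_def)
  ultimately show ?thesis
    by (simp only: frm.simps(2) frm prod.case Let_def)
qed

lemma scurv_Suc:
  "scurv g (Suc i) s = norm (vderiv (sframe g i) s + scurv g i s *\<^sub>R sframe g (i - 1) s)"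
  unfolding scurv_def [of g "Suc i"] frm_Suc Let_def by simp

lemma sframe_Suc:
  "sframe g (Suc i) s =
     inverse (scurv g (Suc i) s) *\<^sub>R (vderiv (sframe g i) s + scurv g i s *\<^sub>R sframe g (i - 1) s)"
  unfolding scurv_Suc unfolding sframe_def [of g "Suc i"] frm_Suc Let_def by simp

lemma scurv_scaleR_sframe_Suc:
  "scurv g (Suc i) s *\<^sub>R sframe g (Suc i) s = vderiv (sframe g i) s + scurv g i s *\<^sub>R sframe g (i - 1) s"
  by (cases "vderiv (sframe g i) s + scurv g i s *\<^sub>R sframe g (i - 1) s = 0")
    (simp_all add: sframe_Suc scurv_Suc)

context
  fixes I :: "real set" and g :: "real \<Rightarrow> real^'m::enum"
  assumes I: "open I" and g: "sph_unit_speed_curve I g"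
begin

lemma scurv_pos: "0 < i \<Longrightarrow> i \<le> CARD('m) - 2 \<Longrightarrow> s \<in> I \<Longrightarrow> scurv g i s > 0"
  using g unfolding sph_unit_speed_curve_def by auto

lemma sframe_differentiable_upto:
  "i \<le> CARD('m) - 2 \<Longrightarrow> differentiable_upto k I (sframe g i) \<and> differentiable_upto k I (scurv g i)"
proof (induction i arbitrary: k rule: less_induct)
  case (less i)
  show ?case
  proof (cases i)
    case 0
    then show ?thesis using g differentiable_upto_const[of k I 0]
      by (simp add: sph_unit_speed_curve_def smooth_curve_on_imp_differentiable_upto)
  next
    case (Suc j)
    define w where "w s = vderiv (sframe g j) s + scurv g j s *\<^sub>R sframe g (j - 1) s" for s
    have "differentiable_upto k I w" for k
    proof -
      have "differentiable_upto (Suc k) I (sframe g j)" "differentiable_upto k I (scurv g j)"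
        "differentiable_upto k I (sframe g (j - 1))"
        using less.IH[of j] less.IH[of "j - 1"] less.prems Suc by auto
      then show ?thesis unfolding w_def
        by (intro differentiable_upto_add differentiable_upto_scaleR differentiable_upto_vderiv(1)[OF I])
    qed
    moreover have "w s \<noteq> 0" if "s \<in> I" for s
      using scurv_pos[of i s] less.prems Suc that by (simp add: w_def scurv_Suc)
    ultimately have "differentiable_upto k I (\<lambda>s. norm (w s))" for k
      unfolding norm_eq_sqrt_inner
      by (intro differentiable_upto_sqrt differentiable_upto_inner) auto
    with \<open>differentiable_upto k I w\<close> \<open>\<And>s. s \<in> I \<Longrightarrow> w s \<noteq> 0\<close> show ?thesis
      unfolding Suc sframe_Suc scurv_Suc w_def[symmetric]
      by (auto intro!: differentiable_upto_scaleR differentiable_upto_inverse)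
  qed
qed

lemma sframe_frenet:
  assumes "Suc i \<le> CARD('m) - 2" "s \<in> I"
  shows "(sframe g i has_vector_derivative
           scurv g (Suc i) s *\<^sub>R sframe g (Suc i) s - scurv g i s *\<^sub>R sframe g (i - 1) s) (at s)"
  using differentiable_upto_vderiv(2)[OF I, of 0 "sframe g i" s] sframe_differentiable_upto[of i 1] assms
  by (simp add: scurv_scaleR_sframe_Suc)

lemma norm_sframe: "i \<le> CARD('m) - 2 \<Longrightarrow> s \<in> I \<Longrightarrow> norm (sframe g i s) = 1"
  using g scurv_pos[of i s] unfolding sph_unit_speed_curve_def
  by (cases i) (auto simp: sframe_Suc scurv_Suc)

lemma sframe_Suc_orthogonal:
  assumes m: "Suc m \<le> CARD('m) - 2" and t: "t \<in> I" and j: "j \<le> m"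
    and orth: "\<And>i j t. i \<le> m \<Longrightarrow> j \<le> m \<Longrightarrow> t \<in> I \<Longrightarrow>
                 sframe g i t \<bullet> sframe g j t = (if i = j then 1 else 0)"
  shows "sframe g (Suc m) t \<bullet> sframe g j t = 0"
proof -
  define u where "u i = sframe g i t" for i
  define \<kappa> where "\<kappa> i = scurv g i t" for i
  define D where "D i = \<kappa> (Suc i) *\<^sub>R u (Suc i) - \<kappa> i *\<^sub>R u (i - 1)" for i
  have deriv: "(sframe g i has_vector_derivative D i) (at t)" if "i \<le> m" for i
    using sframe_frenet[of i t] m t that unfolding D_def u_def \<kappa>_def by simp
  have orth_t: "u i \<bullet> u k = (if i = k then 1 else 0)" if "i \<le> m" "k \<le> m" for i k
    using orth[OF that t] unfolding u_def .
  have swap: "D m \<bullet> u j = - (u m \<bullet> D j)"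
    using const_inner_derivative_eq_0[OF I t _ deriv[of m] deriv[OF j], of "if m = j then 1 else 0"]
      orth[of m j] j unfolding u_def by (simp add: inner_commute algebra_simps)
  have "\<kappa> (Suc m) * (u (Suc m) \<bullet> u j) = D m \<bullet> u j + \<kappa> m * (u (m - 1) \<bullet> u j)"
    by (simp add: D_def inner_diff_left)
  also have "\<dots> = 0"
  proof (cases "j = m")
    case True
    then have "D m \<bullet> u j = 0" using swap by (simp add: inner_commute)
    moreover have "\<kappa> m * (u (m - 1) \<bullet> u j) = 0"
      using True orth_t[of "m - 1" m] by (cases m) (simp_all add: \<kappa>_def)
    ultimately show ?thesis by simp
  next
    case False
    then have "j < m" using j by simp
    have "\<kappa> j * (u m \<bullet> u (j - 1)) = 0"
      using \<open>j < m\<close> orth_t[of m "j - 1"] by (cases j) (simp_all add: \<kappa>_def)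
    then have "u m \<bullet> D j = \<kappa> (Suc j) * (u m \<bullet> u (Suc j))"
      by (simp add: D_def inner_diff_right)
    moreover have "u (m - 1) \<bullet> u j = (if m = Suc j then 1 else 0)"
      using \<open>j < m\<close> orth_t[of "m - 1" j] by auto
    ultimately show ?thesis
      using swap \<open>j < m\<close> orth_t[of m "Suc j"] by auto
  qed
  finally show ?thesis
    using scurv_pos[of "Suc m" t] m t unfolding u_def \<kappa>_def by simp
qed

lemma sframe_orthonormal:
  assumes "i \<le> CARD('m) - 2" "j \<le> CARD('m) - 2" "t \<in> I"
  shows "sframe g i t \<bullet> sframe g j t = (if i = j then 1 else 0)"
proof -
  have "\<forall>i j t. i \<le> m \<longrightarrow> j \<le> m \<longrightarrow> t \<in> I \<longrightarrow> sframe g i t \<bullet> sframe g j t = (if i = j then 1 else 0)"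
    if "m \<le> CARD('m) - 2" for m
    using that
  proof (induction m)
    case 0
    then show ?case using norm_sframe[of 0] by (auto simp: dot_square_norm)
  next
    case (Suc m)
    then have "sframe g (Suc m) t \<bullet> sframe g j t = 0" if "j \<le> m" "t \<in> I" for j t
      using sframe_Suc_orthogonal[of m t j] that by auto
    then show ?case
      using Suc norm_sframe[of "Suc m"] by (auto simp: le_Suc_eq dot_square_norm inner_commute)
  qed
  from this[of "CARD('m) - 2"] show ?thesis using assms by blast
qed

lemma norm_sph_dual:
  assumes "t \<in> I"
  shows "norm (sph_dual g t) = 1"
proof -
  have "orthonormal_upto (CARD('m) - 1) (\<lambda>i. sframe g i t)"
    using sframe_orthonormal assms unfolding orthonormal_upto_def by simp
  then have "\<exists>!x. (\<forall>i<CARD('m) - 1. sframe g i t \<bullet> x = 0) \<and> norm x = 1 \<and>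
      frame_det ((\<lambda>i. sframe g i t)(CARD('m) - 1 := x)) = 1"
    using orthonormal_completion_exists orthonormal_completion_unique by blast
  from theI'[OF this] show ?thesis
    unfolding sph_dual_def fun_upd_def by simp
qed

end

section \<open>Pedal and orthotomic curves\<close>

lemma power2_inner_less_1:
  fixes P u :: "'a::real_inner"
  assumes "norm P = 1" "norm u = 1" "P \<noteq> u" "P \<noteq> - u"
  shows "(P \<bullet> u)\<^sup>2 < 1"
proof -
  have "\<bar>P \<bullet> u\<bar> \<le> 1"
    using Cauchy_Schwarz_ineq2[of P u] assms(1,2) by simp
  moreover have "\<bar>P \<bullet> u\<bar> \<noteq> 1"
    using norm_cauchy_schwarz_abs_eq[of P u] assms by auto
  ultimately show ?thesis
    by (simp add: abs_square_less_1)
qed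

definition pedal_point :: "'a::real_inner \<Rightarrow> 'a \<Rightarrow> 'a" where
  "pedal_point P u = inverse (sqrt (1 - (P \<bullet> u)\<^sup>2)) *\<^sub>R (P - (P \<bullet> u) *\<^sub>R u)"

lemma inner_pedal_point:
  fixes P u :: "'a::real_inner"
  assumes "P \<bullet> P = 1" "(P \<bullet> u)\<^sup>2 < 1"
  shows "P \<bullet> pedal_point P u = sqrt (1 - (P \<bullet> u)\<^sup>2)"
proof -
  have "P \<bullet> (P - (P \<bullet> u) *\<^sub>R u) = 1 - (P \<bullet> u)\<^sup>2"
    using assms by (simp add: inner_diff_right power2_eq_square)
  then have "P \<bullet> pedal_point P u = (1 - (P \<bullet> u)\<^sup>2) / sqrt (1 - (P \<bullet> u)\<^sup>2)"
    by (simp add: pedal_point_def divide_inverse)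
  also have "\<dots> = sqrt (1 - (P \<bullet> u)\<^sup>2)"
    by (rule real_div_sqrt) (use assms(2) in simp)
  finally show ?thesis .
qed

lemma PhiP_pedal_point:
  fixes P u :: "'a::real_inner"
  assumes "P \<bullet> P = 1" "(P \<bullet> u)\<^sup>2 < 1"
  shows "PhiP P (pedal_point P u) = P - (2 * (P \<bullet> u)) *\<^sub>R u"
proof -
  define r where "r = sqrt (1 - (P \<bullet> u)\<^sup>2)"
  have "r > 0"
    using assms(2) by (simp add: r_def)
  have "PhiP P (pedal_point P u) = (2 * r) *\<^sub>R (inverse r *\<^sub>R (P - (P \<bullet> u) *\<^sub>R u)) - P"
    unfolding PhiP_def inner_pedal_point[OF assms] by (simp add: pedal_point_def r_def)
  also have "\<dots> = 2 *\<^sub>R (P - (P \<bullet> u) *\<^sub>R u) - P"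
    using \<open>r > 0\<close> by simp
  also have "\<dots> = P - (2 * (P \<bullet> u)) *\<^sub>R u"
    by (simp add: algebra_simps scaleR_2)
  finally show ?thesis .
qed

lemma inner_PhiP: "P \<bullet> P = 1 \<Longrightarrow> P \<bullet> PhiP P x = 2 * (P \<bullet> x)\<^sup>2 - 1"
  by (simp add: PhiP_def inner_diff_right power2_eq_square)

definition PsiP :: "'a::real_inner \<Rightarrow> 'a \<Rightarrow> 'a" where
  "PsiP P y = inverse (sqrt ((1 + P \<bullet> y) / 2)) *\<^sub>R ((1 / 2) *\<^sub>R (P + y))"

lemma PsiP_PhiP:
  fixes P x :: "'a::real_inner"
  assumes "P \<bullet> P = 1" "P \<bullet> x > 0"
  shows "PsiP P (PhiP P x) = x"
proof -
  have "sqrt ((1 + P \<bullet> PhiP P x) / 2) = P \<bullet> x"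
    using assms by (simp add: inner_PhiP)
  moreover have "(1 / 2) *\<^sub>R (P + PhiP P x) = (P \<bullet> x) *\<^sub>R x"
    by (simp add: PhiP_def)
  ultimately show ?thesis
    using assms(2) by (simp add: PsiP_def)
qed

lemma PsiP_differentiable:
  fixes P y :: "'a::real_inner"
  assumes "P \<bullet> y > -1"
  shows "PsiP P differentiable (at y)"
proof -
  have "sqrt differentiable (at ((1 + P \<bullet> y) / 2))"
    using DERIV_real_sqrt[of "(1 + P \<bullet> y) / 2"] assms
    by (auto intro: differentiableI[OF has_field_derivative_imp_has_derivative])
  moreover have "(\<lambda>y. (1 + P \<bullet> y) / 2) differentiable (at y)"
    by simp
  ultimately have "(\<lambda>y. sqrt ((1 + P \<bullet> y) / 2)) differentiable (at y)"
    by (rule differentiable_compose)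
  then show ?thesis
    unfolding PsiP_def using assms
    by (intro differentiable_scaleR differentiable_inverse) auto
qed

lemma PhiP_has_derivative:
  "(PhiP P has_derivative (\<lambda>v. (2 * (P \<bullet> v)) *\<^sub>R x + (2 * (P \<bullet> x)) *\<^sub>R v)) (at x)"
  unfolding PhiP_def by (auto intro!: derivative_eq_intros simp: algebra_simps)

lemma inj_PhiP_derivative:
  fixes P x :: "'a::real_inner"
  assumes "P \<bullet> x \<noteq> 0"
  shows "inj (\<lambda>v. (2 * (P \<bullet> v)) *\<^sub>R x + (2 * (P \<bullet> x)) *\<^sub>R v)"
proof -
  have "v = 0" if v: "(2 * (P \<bullet> v)) *\<^sub>R x + (2 * (P \<bullet> x)) *\<^sub>R v = 0" for v
  proof -
    \<comment> \<open>pairing with \<open>P\<close> gives \<open>4 (P \<bullet> x) (P \<bullet> v) = 0\<close>\<close>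
    have "P \<bullet> v = 0"
      using arg_cong[OF v, of "inner P"] assms by (simp add: inner_add_right)
    then show "v = 0"
      using v assms by simp
  qed
  then show ?thesis
    using linear_injective_0[OF has_derivative_linear[OF PhiP_has_derivative]] by blast
qed

lemma not_singular_point_if_inj_derivative:
  fixes f :: "'a::euclidean_space \<Rightarrow> 'a"
  assumes "(f has_derivative f') (at x)" "inj f'"
  shows "\<not> singular_point f x"
proof -
  have "surj f'"
    using linear_injective_imp_surjective[OF has_derivative_linear[OF assms(1)] assms(2)] by simp
  then show ?thesis
    using frechet_derivative_at[OF assms(1)] by (simp add: singular_point_def)
qed

text \<open>Where \<open>f\<close> is not differentiable, \<open>vderiv f\<close> is the choice of an empty predicate, which
  does not depend on \<open>f\<close>.\<close>

lemma vderiv_eq_if_not_differentiable: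
  assumes "\<not> f differentiable (at s)" "\<not> h differentiable (at s)"
  shows "vderiv f s = vderiv h s"
proof -
  have "(\<lambda>f'. (f has_vector_derivative f') (at s)) = (\<lambda>f'. (h has_vector_derivative f') (at s))"
    using assms differentiableI_vector by blast
  then show ?thesis
    unfolding vderiv_def vector_derivative_def by simp
qed

lemma vderiv_comp_eq_0_iff:
  fixes h k :: "real \<Rightarrow> 'a::real_normed_vector"
  assumes I: "open I" "s \<in> I"
    and k: "\<And>t. t \<in> I \<Longrightarrow> k t = F (h t)" and h: "\<And>t. t \<in> I \<Longrightarrow> h t = G (k t)"
    and F: "(F has_derivative F') (at (h s))" "inj F'"
    and G: "G differentiable (at (k s))"
  shows "vderiv k s = 0 \<longleftrightarrow> vderiv h s = 0"
proof (cases "h differentiable (at s)")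
  case True
  then have dh: "(h has_vector_derivative vderiv h s) (at s)"
    by (simp add: vderiv_def vector_derivative_works[symmetric])
  have "((F \<circ> h) has_derivative (\<lambda>t. F' (t *\<^sub>R vderiv h s))) (at s)"
    using diff_chain_at[OF dh[unfolded has_vector_derivative_def] F(1)] by (simp add: comp_def)
  then have "((F \<circ> h) has_vector_derivative F' (vderiv h s)) (at s)"
    using linear_scale[OF has_derivative_linear[OF F(1)]] by (simp add: has_vector_derivative_def)
  then have "(k has_vector_derivative F' (vderiv h s)) (at s)"
    by (rule has_vector_derivative_transform_within_open[OF _ I]) (simp add: k)
  then have "vderiv k s = F' (vderiv h s)"
    unfolding vderiv_def by (rule vector_derivative_at)
  then show ?thesis
    using F(2) linear_injective_0[OF has_derivative_linear[OF F(1)]] linear_0[OF has_derivative_linear[OF F(1)]]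
    by metis
next
  case False
  have "\<not> k differentiable (at s)"
  proof
    assume "k differentiable (at s)"
    then obtain D where "((G \<circ> k) has_derivative D) (at s)"
      using G differentiable_chain_at differentiable_def by blast
    then have "(h has_derivative D) (at s)"
      by (rule has_derivative_transform_within_open[OF _ I]) (simp add: h)
    with False show False
      by (auto simp: differentiable_def)
  qed
  with False show ?thesis
    using vderiv_eq_if_not_differentiable by metis
qed

theorem lemma9:
  fixes I :: "real set" and g :: "real \<Rightarrow> real^'m::enum" and P :: "real^'m::enum" and s :: real
  assumes "card (UNIV :: 'm set) \<ge> 3"
    and "open I" and "is_interval I"
    and "sph_unit_speed_curve I g"
    and "norm P = 1"
    and "\<forall>t\<in>I. P \<noteq> sph_dual g t \<and> P \<noteq> - sph_dual g t"
    and "s \<in> I"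
  shows "vderiv (sph_orthotomic g P) s = 0 \<longleftrightarrow>
           (vderiv (sph_pedal g P) s = 0 \<or> singular_point (PhiP P) (sph_pedal g P s))"
proof -
  have PP: "P \<bullet> P = 1"
    using assms(5) by (simp add: dot_square_norm)
  have dual: "(P \<bullet> sph_dual g t)\<^sup>2 < 1" if "t \<in> I" for t
    using power2_inner_less_1 norm_sph_dual[OF assms(2,4) that] assms(5,6) that by blast
  have pedal: "sph_pedal g P t = pedal_point P (sph_dual g t)" for t
    by (simp add: sph_pedal_def pedal_point_def)
  have pos: "P \<bullet> sph_pedal g P t > 0" if "t \<in> I" for t
    using inner_pedal_point[OF PP dual[OF that]] dual[OF that] by (simp add: pedal)
  have ort: "sph_orthotomic g P t = PhiP P (sph_pedal g P t)" if "t \<in> I" for t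
    using PhiP_pedal_point[OF PP dual[OF that]] by (simp add: pedal sph_orthotomic_def)
  have "P \<bullet> sph_orthotomic g P s > -1"
    using pos[OF assms(7)] by (simp add: ort[OF assms(7)] inner_PhiP[OF PP])
  then have "vderiv (sph_orthotomic g P) s = 0 \<longleftrightarrow> vderiv (sph_pedal g P) s = 0"
    using pos[OF assms(7)] PsiP_PhiP[OF PP pos] ort
    by (intro vderiv_comp_eq_0_iff[OF assms(2,7) ort _ PhiP_has_derivative
          inj_PhiP_derivative PsiP_differentiable]) auto
  moreover have "\<not> singular_point (PhiP P) (sph_pedal g P s)"
    using pos[OF assms(7)]
    by (intro not_singular_point_if_inj_derivative[OF PhiP_has_derivative] inj_PhiP_derivative) simp
  ultimately show ?thesis
    by simp
qed

end
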